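(* Every rooted duplication tree $T$ with $n$ leaves admits a unique finite sequence of duplication events $(B_1,B_2,\dots,B_k)$ with $B_1\preceq B_2\preceq\cdots\preceq B_k$ such that applying $B_1,\dots,B_k$ in this order to the single root gene produces $T$ (with its leaf order).
   Context: A duplication event on a current ordered array of genes $(g_1,\dots,g_m)$ is specified by a contiguous set of indices $B=\{i,i+1,\dots,i+\ell-1\}$ with $1\le i\le i+\ell-1\le m$; applying it gives each $g_j$, $j\in B$, two new children $\mathrm{lc}(g_j),\mathrm{rc}(g_j)$ and replaces $g_i,\dots,g_{i+\ell-1}$ by $\mathrm{lc}(g_i),\dots,\mathrm{lc}(g_{i+\ell-1}),\mathrm{rc}(g_i),\dots,\mathrm{rc}(g_{i+\ell-1})$. A rooted duplication tree is a rooted binary tree with ordered leaves arising from a single root gene by a finite sequence of such events (internal nodes = duplicated genes, leaves = final genes in order). For index sets $B_1,B_2$ write $B_1\prec B_2$ iff $\max B_1<\min B_2$, and $B_1\preceq B_2$ iff not $B_2\prec B_1$ (i.e. $\min B_1\le \max B_2$). *)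

theory Defs
  imports Main
begin

text \<open>A gene is identified by its address in the duplication tree: the root gene is the
  empty list, and the left/right children of a gene g are g @ [False] / g @ [True].
  The ordered array of current genes is a list of addresses; the final array determines the
  rooted duplication tree (internal nodes = proper prefixes) together with its leaf order.\<close>

type_synonym gene = "bool list"

definition lc :: "gene \<Rightarrow> gene" where "lc g = g @ [False]"
definition rc :: "gene \<Rightarrow> gene" where "rc g = g @ [True]"

definition is_event :: "nat \<Rightarrow> nat set \<Rightarrow> bool" where
  "is_event m B \<longleftrightarrow> (\<exists>i l. 1 \<le> i \<and> 1 \<le> l \<and> i + l - 1 \<le> m \<and> B = {i..i + l - 1})"

definition apply_event :: "nat set \<Rightarrow> gene list \<Rightarrow> gene list" where
  "apply_event B gs =
     (let i = Min B; l = card B; blk = take l (drop (i - 1) gs)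
      in take (i - 1) gs @ map lc blk @ map rc blk @ drop (i - 1 + l) gs)"

fun run :: "nat set list \<Rightarrow> gene list \<Rightarrow> gene list option" where
  "run [] gs = Some gs"
| "run (B # Bs) gs = (if is_event (length gs) B then run Bs (apply_event B gs) else None)"

definition dup_tree :: "gene list \<Rightarrow> bool" where
  "dup_tree T \<longleftrightarrow> (\<exists>Bs. run Bs [[]] = Some T)"

definition blk_prec :: "nat set \<Rightarrow> nat set \<Rightarrow> bool" where
  "blk_prec B1 B2 \<longleftrightarrow> Max B1 < Min B2"

definition blk_preceq :: "nat set \<Rightarrow> nat set \<Rightarrow> bool" where
  "blk_preceq B1 B2 \<longleftrightarrow> \<not> blk_prec B2 B1"

end

theory Submission
  imports Defs "HOL-Library.Sublist"
begin

text \<open>Two events commute up to a shift when the later one lies strictly to the left of the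
  earlier one, so bubbling each new event leftwards turns any sequence into a sorted one.
  For uniqueness, call a stretch of left children immediately followed by their right siblings
  a tandem. The last event of a sorted sequence creates the rightmost tandem of the final array:
  a tandem further right would, undone through the preceding events, survive as a tandem to the
  right of their blocks and finally in the root array. Since genes are distinct, the tandem at a
  given position has a unique length, so the final array determines the last event and the array
  before it, and induction finishes.\<close>

lemma lc_neq_rc [simp]: "lc x \<noteq> rc y" and rc_neq_lc [simp]: "rc x \<noteq> lc y"
  by (simp_all add: lc_def rc_def)

lemma lc_inject [simp]: "lc x = lc y \<longleftrightarrow> x = y" and rc_inject [simp]: "rc x = rc y \<longleftrightarrow> x = y"
  by (simp_all add: lc_def rc_def)

lemma successively_iff_nth:
  "successively P xs \<longleftrightarrow> (\<forall>j. Suc j < length xs \<longrightarrow> P (xs ! j) (xs ! Suc j))"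
proof (induction xs rule: induct_list012)
  case (3 x y xs)
  then show ?case by (auto simp: nth_Cons split: nat.splits)
qed auto

text \<open>The event with 1-based indices \<open>p + 1, \<dots>, p + l\<close>, i.e. acting on the
  0-based positions \<open>p, \<dots>, p + l - 1\<close> of the array.\<close>
definition block :: "nat \<Rightarrow> nat \<Rightarrow> nat set" where
  "block p l = {Suc p..p + l}"

lemma Min_block: "0 < l \<Longrightarrow> Min (block p l) = Suc p"
  unfolding block_def by (rule Min_eqI) auto

lemma Max_block: "0 < l \<Longrightarrow> Max (block p l) = p + l"
  unfolding block_def by (rule Max_eqI) auto

lemma card_block: "card (block p l) = l"
  by (simp add: block_def)

lemma is_event_iff_block: "is_event m B \<longleftrightarrow> (\<exists>p l. B = block p l \<and> 0 < l \<and> p + l \<le> m)"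
proof
  assume "is_event m B"
  then obtain i l where "1 \<le> i" "1 \<le> l" "i + l - 1 \<le> m" "B = {i..i + l - 1}"
    unfolding is_event_def by blast
  then show "\<exists>p l. B = block p l \<and> 0 < l \<and> p + l \<le> m"
    by (intro exI[of _ "i - 1"] exI[of _ l]) (auto simp: block_def)
next
  assume "\<exists>p l. B = block p l \<and> 0 < l \<and> p + l \<le> m"
  then obtain p l where "B = block p l" "0 < l" "p + l \<le> m" by blast
  then show "is_event m B"
    unfolding is_event_def block_def by (intro exI[of _ "Suc p"] exI[of _ l]) auto
qed

lemma blk_preceq_block:
  "0 < l \<Longrightarrow> 0 < l' \<Longrightarrow> blk_preceq (block p l) (block p' l') \<longleftrightarrow> p < p' + l'"
  by (auto simp: blk_preceq_def blk_prec_def Min_block Max_block)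

definition duplicate :: "nat \<Rightarrow> nat \<Rightarrow> gene list \<Rightarrow> gene list" where
  "duplicate p l gs =
     take p gs @ map lc (take l (drop p gs)) @ map rc (take l (drop p gs)) @ drop (p + l) gs"

lemma apply_event_block: "0 < l \<Longrightarrow> apply_event (block p l) gs = duplicate p l gs"
  by (simp add: apply_event_def duplicate_def Min_block card_block Let_def)

lemma length_duplicate: "p + l \<le> length gs \<Longrightarrow> length (duplicate p l gs) = length gs + l"
  by (simp add: duplicate_def)

lemma duplicate_append:
  "length xs = p \<Longrightarrow> length ys = l \<Longrightarrow>
   duplicate p l (xs @ ys @ zs) = xs @ map lc ys @ map rc ys @ zs"
  by (simp add: duplicate_def)

lemma split_three:
  assumes "p + l \<le> length gs"
  obtains xs ys zs where "gs = xs @ ys @ zs" "length xs = p" "length ys = l"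
proof
  show "gs = take p gs @ take l (drop p gs) @ drop (p + l) gs"
    by (metis append_take_drop_id drop_drop add.commute)
qed (use assms in auto)

lemma nth_duplicate:
  assumes "p + l \<le> length gs" "k < length gs + l"
  shows "duplicate p l gs ! k =
    (if k < p then gs ! k else if k < p + l then lc (gs ! k)
     else if k < p + 2 * l then rc (gs ! (k - l)) else gs ! (k - l))"
  using assms by (auto simp: duplicate_def nth_append min_def intro!: arg_cong[where f = "(!) gs"])

lemma duplicate_commute:
  assumes "p + l \<le> p'" "p' + l' \<le> length gs"
  shows "duplicate (p' + l) l' (duplicate p l gs) = duplicate p l (duplicate p' l' gs)"
proof -
  obtain xs ys zs where gs: "gs = xs @ ys @ zs" "length xs = p'" "length ys = l'"
    using split_three assms(2) .
  obtain us vs ws where xs: "xs = us @ vs @ ws" "length us = p" "length vs = l"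
    using split_three[of p l xs] assms(1) gs(2) by auto
  have "duplicate p l gs = (us @ map lc vs @ map rc vs @ ws) @ ys @ zs"
    using gs xs by (simp add: duplicate_append)
  then have "duplicate (p' + l) l' (duplicate p l gs) =
      (us @ map lc vs @ map rc vs @ ws) @ map lc ys @ map rc ys @ zs"
    using gs xs by (simp only: duplicate_append length_append length_map)
  moreover have "duplicate p' l' gs = us @ vs @ (ws @ map lc ys @ map rc ys @ zs)"
    unfolding gs(1) using duplicate_append[OF gs(2,3)] xs(1) by simp
  ultimately show ?thesis
    using xs by (simp add: duplicate_append)
qed

lemma duplicate_inject:
  assumes "duplicate p l gs = duplicate p l gs'" "p + l \<le> length gs" "p + l \<le> length gs'"
  shows "gs = gs'"
proof -
  obtain xs ys zs where gs: "gs = xs @ ys @ zs" "length xs = p" "length ys = l"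
    using split_three assms(2) .
  obtain xs' ys' zs' where gs': "gs' = xs' @ ys' @ zs'" "length xs' = p" "length ys' = l"
    using split_three assms(3) .
  have "xs @ map lc ys @ map rc ys @ zs = xs' @ map lc ys' @ map rc ys' @ zs'"
    using assms(1) gs gs' by (simp add: duplicate_append)
  then have "xs = xs'" "map lc ys = map lc ys'" "zs = zs'"
    using gs gs' by simp_all
  then show ?thesis
    using gs gs' by (simp add: inj_def)
qed

lemma run_append: "run (Bs @ Cs) gs = Option.bind (run Bs gs) (run Cs)"
  by (induction Bs arbitrary: gs) auto

lemma run_snoc_block:
  "run Bs gs = Some A \<Longrightarrow> 0 < l \<Longrightarrow> p + l \<le> length A \<Longrightarrow>
   run (Bs @ [block p l]) gs = Some (duplicate p l A)"
  by (auto simp: run_append is_event_iff_block apply_event_block)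

lemma run_snocE:
  assumes "run (Bs @ [B]) gs = Some T"
  obtains A p l where "run Bs gs = Some A" "B = block p l" "0 < l" "p + l \<le> length A"
    "T = duplicate p l A"
proof -
  obtain A where A: "run Bs gs = Some A" "is_event (length A) B" "T = apply_event B A"
    using assms by (auto simp: run_append split: if_splits bind_split_asm)
  then obtain p l where "B = block p l" "0 < l" "p + l \<le> length A"
    by (auto simp: is_event_iff_block)
  with A show thesis using that by (simp add: apply_event_block)
qed

text \<open>Distinctness alone is not preserved by duplication (a gene and one of its children
  may both be present); this antichain property is.\<close>
definition prefix_free :: "gene list \<Rightarrow> bool" where
  "prefix_free gs \<longleftrightarrow> (\<forall>i < length gs. \<forall>j < length gs. prefix (gs ! i) (gs ! j) \<longrightarrow> i = j)"

lemma prefix_freeD: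
  "prefix_free gs \<Longrightarrow> i < length gs \<Longrightarrow> j < length gs \<Longrightarrow> prefix (gs ! i) (gs ! j) \<Longrightarrow> i = j"
  by (simp add: prefix_free_def)

lemma prefix_free_imp_distinct: "prefix_free gs \<Longrightarrow> distinct gs"
  by (auto simp: prefix_free_def distinct_conv_nth)

lemma prefix_free_duplicate:
  assumes len: "p + l \<le> length gs" and pf: "prefix_free gs"
  shows "prefix_free (duplicate p l gs)"
proof -
  define src where "src k = (if k < p + l then k else k - l)" for k
  define suf where "suf k = (if k < p then [] else if k < p + l then [False]
                             else if k < p + 2 * l then [True] else [])" for k
  have entry: "duplicate p l gs ! k = gs ! src k @ suf k" if "k < length gs + l" for k
    using nth_duplicate[OF len that] by (simp add: src_def suf_def lc_def rc_def)
  have src: "src k < length gs" if "k < length gs + l" for k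
    using that len by (auto simp: src_def)
  have same_src: "i = j"
    if "i < length gs + l" "j < length gs + l" "prefix (gs ! src i @ suf i) (gs ! src j @ suf j)"
    for i j
  proof -
    have "prefix (gs ! src i) (gs ! src j @ suf j)"
      using that(3) by (rule append_prefixD)
    moreover have "suf j = [] \<or> (\<exists>b. suf j = [b])"
      by (auto simp: suf_def)
    ultimately have "prefix (gs ! src i) (gs ! src j) \<or> prefix (gs ! src j) (gs ! src i)"
      by auto
    then have "src i = src j"
      using prefix_freeD[OF pf src[OF that(1)] src[OF that(2)]]
        prefix_freeD[OF pf src[OF that(2)] src[OF that(1)]] by metis
    with that(3) have "prefix (suf i) (suf j)"
      by simp
    then have "suf i = [] \<or> suf i = suf j"
      by (auto simp: suf_def split: if_splits)
    with \<open>src i = src j\<close> show "i = j"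
      unfolding src_def suf_def by (auto split: if_splits)
  qed
  show ?thesis
    unfolding prefix_free_def length_duplicate[OF len]
  proof (intro allI impI)
    fix i j
    assume "i < length gs + l" "j < length gs + l"
      and "prefix (duplicate p l gs ! i) (duplicate p l gs ! j)"
    with entry show "i = j"
      by (intro same_src) simp_all
  qed
qed

lemma run_prefix_free: "run Bs gs = Some T \<Longrightarrow> prefix_free gs \<Longrightarrow> prefix_free T"
proof (induction Bs arbitrary: gs)
  case (Cons B Bs)
  then have "is_event (length gs) B" and run: "run Bs (apply_event B gs) = Some T"
    by (simp_all split: if_splits)
  then obtain p l where "B = block p l" "0 < l" "p + l \<le> length gs"
    by (auto simp: is_event_iff_block)
  with run Cons.IH Cons.prems(2) show ?case
    by (simp add: apply_event_block prefix_free_duplicate)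
qed simp

corollary run_root_distinct: "run Bs [[]] = Some T \<Longrightarrow> distinct T"
  by (rule prefix_free_imp_distinct, erule run_prefix_free) (simp add: prefix_free_def)

definition tandem :: "gene list \<Rightarrow> nat \<Rightarrow> nat \<Rightarrow> bool" where
  "tandem gs q m \<longleftrightarrow> 0 < m \<and> q + 2 * m \<le> length gs \<and>
     (\<forall>t < m. \<exists>y. gs ! (q + t) = lc y \<and> gs ! (q + m + t) = rc y)"

lemma tandem_duplicate: "0 < l \<Longrightarrow> p + l \<le> length gs \<Longrightarrow> tandem (duplicate p l gs) p l"
  by (auto simp: tandem_def length_duplicate nth_duplicate)

lemma tandem_length_unique: "tandem gs q m \<Longrightarrow> tandem gs q m' \<Longrightarrow> m = m'"
  by (metis tandem_def add_0_right lc_neq_rc linorder_neqE_nat)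

lemma tandem_duplicate_shift:
  assumes len: "p + l \<le> length gs" and tan: "tandem (duplicate p l gs) q m"
    and right: "p + 2 * l \<le> q"
  shows "tandem gs (q - l) m"
proof -
  have bound: "q + 2 * m \<le> length gs + l"
    using tan len by (simp add: tandem_def length_duplicate)
  have shifted: "duplicate p l gs ! (q + k) = gs ! (q - l + k)" if "k < 2 * m" for k
    using nth_duplicate[OF len, of "q + k"] that bound right by simp
  show ?thesis
    unfolding tandem_def
  proof (intro conjI allI impI)
    show "0 < m" "q - l + 2 * m \<le> length gs"
      using tan bound right by (simp_all add: tandem_def)
    fix t
    assume "t < m"
    then have "duplicate p l gs ! (q + t) = gs ! (q - l + t)"
      and "duplicate p l gs ! (q + m + t) = gs ! (q - l + m + t)"
      using shifted[of t] shifted[of "m + t"] by (simp_all add: add.assoc)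
    moreover obtain y where "duplicate p l gs ! (q + t) = lc y" "duplicate p l gs ! (q + m + t) = rc y"
      using tan \<open>t < m\<close> unfolding tandem_def by blast
    ultimately show "\<exists>y. gs ! (q - l + t) = lc y \<and> gs ! (q - l + m + t) = rc y"
      by (intro exI[of _ y]) simp
  qed
qed

lemma tandem_duplicate_overlap:
  assumes len: "p + l \<le> length gs" and dist: "distinct (duplicate p l gs)"
    and tan: "tandem (duplicate p l gs) q m" and q: "p < q" "q < p + 2 * l"
  shows False
proof -
  \<comment> \<open>By distinctness the tandem pairs each left copy with its own right copy, so it has
    length \<open>l\<close>; but then its last left entry lies among the right copies.\<close>
  let ?T = "duplicate p l gs"
  have lenT: "length ?T = length gs + l" and fit: "q + 2 * m \<le> length gs + l" and "0 < m"
    using tan len by (simp_all add: tandem_def length_duplicate)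
  have pairs: "\<exists>y. ?T ! (q + t) = lc y \<and> ?T ! (q + m + t) = rc y" if "t < m" for t
    using tan that by (simp add: tandem_def)
  have T_at: "?T ! k = (if k < p + l then lc (gs ! k) else rc (gs ! (k - l)))"
    if "p < k" "k < p + 2 * l" for k
    using nth_duplicate[OF len, of k] that len by simp
  obtain y where y: "?T ! q = lc y" "?T ! (q + m) = rc y"
    using pairs[OF \<open>0 < m\<close>] by auto
  have "q < p + l"
    using y(1) T_at[OF q] by (auto split: if_splits)
  then have "?T ! (q + l) = ?T ! (q + m)"
    using y T_at[OF q] T_at[of "q + l"] q by auto
  then have "m = l"
    using dist fit lenT \<open>q < p + l\<close> len by (simp add: nth_eq_iff_index_eq)
  obtain y' where "?T ! (q + (l - 1)) = lc y'"
    using pairs[of "l - 1"] \<open>m = l\<close> \<open>0 < m\<close> by auto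
  moreover have "?T ! (q + (l - 1)) = rc (gs ! (q + (l - 1) - l))"
  proof -
    have "p < q + (l - 1)" "q + (l - 1) < p + 2 * l" "\<not> q + (l - 1) < p + l"
      using q \<open>q < p + l\<close> by linarith+
    then show ?thesis
      by (simp only: T_at if_False)
  qed
  ultimately show False
    by simp
qed

lemma tandem_duplicate_right:
  assumes "p + l \<le> length gs" "distinct (duplicate p l gs)" "tandem (duplicate p l gs) q m" "p < q"
  shows "p + 2 * l \<le> q \<and> tandem gs (q - l) m"
  using assms tandem_duplicate_shift tandem_duplicate_overlap not_le by blast

lemma sorted_run_tandem_le:
  assumes "run Bs [[]] = Some gs" "0 < l" "p + l \<le> length gs"
    "successively blk_preceq (Bs @ [block p l])" "tandem (duplicate p l gs) q m"
  shows "q \<le> p"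
  using assms
proof (induction Bs arbitrary: gs p l q m rule: rev_induct)
  case Nil
  show ?case
  proof (rule ccontr)
    assume "\<not> q \<le> p"
    moreover have "distinct (duplicate p l gs)"
      using Nil.prems(1-3) by (blast intro: run_root_distinct run_snoc_block)
    ultimately have "tandem gs (q - l) m"
      using Nil.prems tandem_duplicate_right by simp
    moreover have "gs = [[]]"
      using Nil.prems(1) by simp
    ultimately show False
      by (auto simp: tandem_def)
  qed
next
  case (snoc B Bs)
  obtain gs' p' l' where gs': "run Bs [[]] = Some gs'" "B = block p' l'" "0 < l'"
    "p' + l' \<le> length gs'" "gs = duplicate p' l' gs'"
    using run_snocE[OF snoc.prems(1)] .
  have sorted: "successively blk_preceq (Bs @ [block p' l'])" and "p' < p + l"
    using snoc.prems(2,4) gs'(2,3) by (simp_all add: successively_append_iff blk_preceq_block)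
  show ?case
  proof (rule ccontr)
    assume "\<not> q \<le> p"
    moreover have "distinct (duplicate p l gs)"
      using snoc.prems(1-3) by (blast intro: run_root_distinct run_snoc_block)
    ultimately have "p + 2 * l \<le> q" "tandem gs (q - l) m"
      using snoc.prems tandem_duplicate_right by simp_all
    moreover have "q - l \<le> p'"
      using snoc.IH[OF gs'(1,3,4) sorted] \<open>tandem gs (q - l) m\<close> gs'(5) by simp
    ultimately show False
      using \<open>p' < p + l\<close> by linarith
  qed
qed

lemma run_snoc_length_ge: "run (Bs @ [B]) gs = Some T \<Longrightarrow> 2 \<le> length T"
  by (elim run_snocE) (simp add: length_duplicate)

lemma sorted_run_unique:
  assumes "run Bs [[]] = Some T" "successively blk_preceq Bs"
    "run Cs [[]] = Some T" "successively blk_preceq Cs"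
  shows "Bs = Cs"
  using assms
proof (induction Bs arbitrary: T Cs rule: rev_induct)
  case Nil
  show ?case
  proof (rule ccontr)
    assume "[] \<noteq> Cs"
    then obtain C Cs' where "Cs = Cs' @ [C]"
      by (metis rev_exhaust)
    then have "2 \<le> length T"
      using Nil.prems(3) by (simp add: run_snoc_length_ge)
    with Nil.prems(1) show False
      by auto
  qed
next
  case (snoc B Bs)
  obtain gs p l where B: "run Bs [[]] = Some gs" "B = block p l" "0 < l"
    "p + l \<le> length gs" "T = duplicate p l gs"
    using run_snocE[OF snoc.prems(1)] .
  have "Cs \<noteq> []"
    using snoc.prems(1,3) run_snoc_length_ge by force
  then obtain C Cs' where Cs: "Cs = Cs' @ [C]"
    by (metis rev_exhaust)
  obtain gs' p' l' where C: "run Cs' [[]] = Some gs'" "C = block p' l'" "0 < l'"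
    "p' + l' \<le> length gs'" "T = duplicate p' l' gs'"
    using run_snocE[OF snoc.prems(3)[unfolded Cs]] .
  have tandem_B: "tandem T p l" and tandem_C: "tandem T p' l'"
    using tandem_duplicate[OF B(3,4)] tandem_duplicate[OF C(3,4)] B(5) C(5) by simp_all
  have "p' \<le> p"
    using sorted_run_tandem_le[OF B(1,3,4)] snoc.prems(2) tandem_C B(2,5) by simp
  moreover have "p \<le> p'"
    using sorted_run_tandem_le[OF C(1,3,4)] snoc.prems(4) tandem_B C(2,5) Cs by simp
  ultimately have "p = p'"
    by simp
  moreover from this have "l = l'"
    using tandem_length_unique[OF tandem_B] tandem_C by simp
  ultimately have "duplicate p l gs = duplicate p l gs'" "p + l \<le> length gs'"
    using B(5) C(4,5) by simp_all
  then have "gs = gs'"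
    using duplicate_inject B(4) by blast
  then have "Bs = Cs'"
    using snoc.IH[OF B(1)] C(1) snoc.prems(2,4) Cs by (simp add: successively_append_iff)
  then show ?case
    using Cs B(2) C(2) \<open>p = p'\<close> \<open>l = l'\<close> by simp
qed

text \<open>The third conjunct strengthens the induction: it is exactly what allows the shifted
  event to be appended after the recursively sorted prefix.\<close>
lemma sorted_run_insert:
  assumes "successively blk_preceq Cs" "run Cs gs0 = Some gs" "0 < l" "p + l \<le> length gs"
  shows "\<exists>Ds. successively blk_preceq Ds \<and> run Ds gs0 = Some (duplicate p l gs) \<and>
    (\<forall>r k. 0 < k \<longrightarrow> blk_preceq (block p l) (block r k) \<longrightarrow>
      (Cs \<noteq> [] \<longrightarrow> blk_preceq (last Cs) (block r k)) \<longrightarrow>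
      blk_preceq (last Ds) (block (r + l) k))"
  using assms
proof (induction Cs arbitrary: gs p l rule: rev_induct)
  case Nil
  then show ?case
    using run_snoc_block[of "[]" gs0 gs l p]
    by (intro exI[of _ "[block p l]"]) (simp add: blk_preceq_block)
next
  case (snoc C Cs)
  obtain gs' p' l' where C: "run Cs gs0 = Some gs'" "C = block p' l'" "0 < l'"
    "p' + l' \<le> length gs'" "gs = duplicate p' l' gs'"
    using run_snocE[OF snoc.prems(2)] .
  have sorted: "successively blk_preceq Cs" "Cs \<noteq> [] \<Longrightarrow> blk_preceq (last Cs) C"
    using snoc.prems(1) by (auto simp: successively_append_iff)
  show ?case
  proof (cases "p' < p + l")
    case True
    then show ?thesis
      using snoc.prems C(2,3) run_snoc_block[OF snoc.prems(2-4)]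
      by (intro exI[of _ "Cs @ [C] @ [block p l]"])
        (simp add: successively_append_iff blk_preceq_block)
  next
    case False
    then have "p + l \<le> length gs'"
      using C(4) by linarith
    then obtain Ds where Ds: "successively blk_preceq Ds" "run Ds gs0 = Some (duplicate p l gs')"
      "\<And>r k. 0 < k \<Longrightarrow> blk_preceq (block p l) (block r k) \<Longrightarrow>
        (Cs \<noteq> [] \<Longrightarrow> blk_preceq (last Cs) (block r k)) \<Longrightarrow>
        blk_preceq (last Ds) (block (r + l) k)"
      using snoc.IH[OF sorted(1) C(1) snoc.prems(3)] by blast
    have "blk_preceq (last Ds) (block (p' + l) l')"
      using Ds(3)[OF C(3)] sorted(2) False snoc.prems(3) C(2,3) by (simp add: blk_preceq_block)
    then have "successively blk_preceq (Ds @ [block (p' + l) l'])"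
      using Ds(1) by (simp add: successively_append_iff)
    moreover have "run (Ds @ [block (p' + l) l']) gs0 = Some (duplicate p l gs)"
      using run_snoc_block[OF Ds(2) C(3)] False C(4,5) duplicate_commute[of p l p' l' gs']
      by (simp add: length_duplicate)
    ultimately show ?thesis
      using C(2,3) by (intro exI[of _ "Ds @ [block (p' + l) l']"]) (simp add: blk_preceq_block)
  qed
qed

lemma sorted_run_exists: "run Bs gs0 = Some T \<Longrightarrow> \<exists>Cs. successively blk_preceq Cs \<and> run Cs gs0 = Some T"
proof (induction Bs arbitrary: T rule: rev_induct)
  case Nil
  then show ?case
    by (intro exI[of _ "[]"]) simp
next
  case (snoc B Bs)
  obtain gs p l where "run Bs gs0 = Some gs" "0 < l" "p + l \<le> length gs" "T = duplicate p l gs"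
    using run_snocE[OF snoc.prems] .
  with snoc.IH show ?case
    by (metis sorted_run_insert)
qed

theorem lemma3p3:
  fixes T :: "gene list" and n :: nat
  assumes "dup_tree T" and "length T = n"
  shows "\<exists>!Bs. run Bs [[]] = Some T \<and>
              (\<forall>j. Suc j < length Bs \<longrightarrow> blk_preceq (Bs ! j) (Bs ! Suc j))"
  unfolding successively_iff_nth[symmetric]
  using assms(1) sorted_run_exists sorted_run_unique unfolding dup_tree_def by metis

end
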